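(* Let $1\le k\le d$ and let $\alpha^1,\dots,\alpha^k\in\mathbb{R}^d$ be such that $\alpha^1,\dots,\alpha^k,e_{k+1},\dots,e_d$ are linearly independent. Let $\alpha^{k+1}\in\mathbb{R}^d$ be such that $\sum_{i=1}^{k+1}\theta_i\alpha^i=0$ for some $\theta_i>0$ with $\sum_{i=1}^{k+1}\theta_i=1$. Let $M_1,\dots,M_{k+1}>0$ and let $a_i<b_i$ be integers for $k+1\le i\le d$. Then $$\sum_{j_1\in\mathbb{Z}}\cdots\sum_{j_k\in\mathbb{Z}}\sum_{j_{k+1}=a_{k+1}}^{b_{k+1}}\cdots\sum_{j_d=a_d}^{b_d}\min_{1\le n\le k+1}\{M_n2^{\alpha^n\cdot\vec j}\}\le C\prod_{i=k+1}^d(b_i-a_i)\prod_{i=1}^{k+1}M_i^{\theta_i},$$ where $\vec j=(j_1,\dots,j_d)$ and $C$ is independent of all $a_n$, $b_n$, $M_n$.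
   Context: $e_1,\dots,e_d$ is the standard basis of $\mathbb{R}^d$ and $\cdot$ the standard inner product. *)

theory Defs
  imports "HOL-Analysis.Analysis"
begin

text \<open>Vectors of R^d are represented as functions nat => real, only the
coordinates 1..d being relevant. Families of vectors are indexed by nat.\<close>

definition std_basis :: "nat \<Rightarrow> nat \<Rightarrow> real" where
  "std_basis n i = (if i = n then 1 else 0)"

definition lin_indep_family :: "nat \<Rightarrow> (nat \<Rightarrow> nat \<Rightarrow> real) \<Rightarrow> nat set \<Rightarrow> bool" where
  "lin_indep_family d v I \<longleftrightarrow>
     (\<forall>c :: nat \<Rightarrow> real. (\<forall>i\<in>{1..d}. (\<Sum>n\<in>I. c n * v n i) = 0) \<longrightarrow> (\<forall>n\<in>I. c n = 0))"

definition dotZ :: "nat \<Rightarrow> (nat \<Rightarrow> real) \<Rightarrow> (nat \<Rightarrow> int) \<Rightarrow> real" where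
  "dotZ d x j = (\<Sum>i=1..d. x i * of_int (j i))"

definition lattice_box :: "nat \<Rightarrow> nat \<Rightarrow> (nat \<Rightarrow> int) \<Rightarrow> (nat \<Rightarrow> int) \<Rightarrow> (nat \<Rightarrow> int) set" where
  "lattice_box d k a b = {j. (\<forall>i. i \<notin> {1..d} \<longrightarrow> j i = 0) \<and> (\<forall>i\<in>{k+1..d}. a i \<le> j i \<and> j i \<le> b i)}"

end

(*
  Put y_n(j) = M_n 2^(alpha^n . j) and P = prod_n M_n^theta_n. Since sum_n theta_n alpha^n = 0, P is
  the theta-weighted geometric mean of the y_n(j). A vector z with sum_n theta_n z_n = 0 has a
  coordinate z_n <= -c sum_l |z_l|, c depending only on theta; for z_n = ln (y_n(j) / P) this gives
  min_n y_n(j) <= P exp (-c sum_n |ln (y_n(j) / P)|).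

  For n <= k, ln (y_n(j) / P) / ln 2 is the n-th coordinate of A (j_1, ..., j_k) - w, where
  A = (alpha^n_l)_{n,l <= k} is invertible by the independence hypothesis and w depends only on M
  and on the bounded coordinates j_{k+1}, ..., j_d. Inverting A bounds sum_{i <= k} |j_i - t_i|,
  with t = A^-1 w, by a multiple of sum_n |ln (y_n(j) / P)|, so the summand is at most
  P prod_{i <= k} exp (-rho |j_i - t_i|). Summed over j_i in Z each factor is a two-sided
  geometric series, bounded independently of t_i, and the bounded coordinates range over at most
  prod_i (b_i - a_i + 1) <= 2^(d-k) prod_i (b_i - a_i) points.
*)
theory Submission
  imports Defs "Jordan_Normal_Form.Determinant"
begin

lemma lin_indep_family_truncate:
  assumes "k \<le> d" and indep: "lin_indep_family d (\<lambda>n. if n \<le> k then \<alpha> n else std_basis n) {1..d}"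
  shows "lin_indep_family k \<alpha> {1..k}"
  unfolding lin_indep_family_def
proof (intro allI impI)
  fix c :: "nat \<Rightarrow> real"
  assume c: "\<forall>i\<in>{1..k}. (\<Sum>n\<in>{1..k}. c n * \<alpha> n i) = 0"
  define c' where "c' n = (if n \<le> k then c n else - (\<Sum>m=1..k. c m * \<alpha> m n))" for n
  have split: "{1..d} = {1..k} \<union> {k+1..d}" using \<open>k \<le> d\<close> by auto
  have "(\<Sum>n\<in>{1..d}. c' n * (if n \<le> k then \<alpha> n else std_basis n) i) = 0" if "i \<in> {1..d}" for i
  proof -
    have "(\<Sum>n\<in>{1..d}. c' n * (if n \<le> k then \<alpha> n else std_basis n) i)
        = (\<Sum>n=1..k. c n * \<alpha> n i) + (\<Sum>n=k+1..d. c' n * (if i = n then 1 else 0))"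
      unfolding split by (subst sum.union_disjoint) (auto simp: c'_def std_basis_def intro!: sum.cong)
    also have "\<dots> = (\<Sum>n=1..k. c n * \<alpha> n i) + (if i \<in> {k+1..d} then c' i else 0)"
      by (simp add: if_distrib[of "\<lambda>x. _ * x"] sum.delta cong: if_cong)
    also have "\<dots> = 0"
      using c that by (auto simp: c'_def)
    finally show ?thesis .
  qed
  then have c'_zero: "\<forall>n\<in>{1..d}. c' n = 0"
    using indep unfolding lin_indep_family_def by blast
  show "\<forall>n\<in>{1..k}. c n = 0"
  proof
    fix n assume n: "n \<in> {1..k}"
    then have "c' n = 0" using c'_zero \<open>k \<le> d\<close> by auto
    then show "c n = 0" using n by (simp add: c'_def)
  qed
qed

text \<open>Jordan_Normal_Form indexes matrices from 0 while the family is indexed from 1, hence the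
  matrix \<open>A\<close> below has entry \<open>\<alpha> (n+1) (l+1)\<close> at \<open>(l, n)\<close>.\<close>
lemma lin_indep_family_left_inverse:
  fixes \<alpha> :: "nat \<Rightarrow> nat \<Rightarrow> real"
  assumes indep: "lin_indep_family k \<alpha> {1..k}"
  shows "\<exists>\<beta>. \<forall>i\<in>{1..k}. \<forall>l\<in>{1..k}. (\<Sum>n=1..k. \<beta> i n * \<alpha> n l) = (if i = l then 1 else 0)"
proof -
  define A :: "real mat" where "A = mat k k (\<lambda>(l, n). \<alpha> (Suc n) (Suc l))"
  have A: "A \<in> carrier_mat k k" unfolding A_def by simp
  have "det A \<noteq> 0"
  proof
    assume "det A = 0"
    then obtain v where v: "v \<in> carrier_vec k" "v \<noteq> 0\<^sub>v k" "A *\<^sub>v v = 0\<^sub>v k"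
      using det_0_iff_vec_prod_zero_field[OF A] by blast
    have "(\<Sum>n=1..k. v $ (n - 1) * \<alpha> n i) = 0" if "i \<in> {1..k}" for i
    proof -
      have "(A *\<^sub>v v) $ (i - 1) = 0" using v(3) that by auto
      then have "(\<Sum>n<k. \<alpha> (Suc n) i * v $ n) = 0"
        using that v(1) unfolding A_def
        by (auto simp: mult_mat_vec_def scalar_prod_def atLeast0LessThan ac_simps)
      then show ?thesis
        unfolding sum.atLeast1_atMost_eq[folded One_nat_def] by (simp add: ac_simps)
    qed
    then have "\<forall>n\<in>{1..k}. v $ (n - 1) = 0"
      using indep[unfolded lin_indep_family_def, rule_format, of "\<lambda>n. v $ (n - 1)"] by blast
    then have "v $ n = 0" if "n < k" for n
      using that by (metis Suc_le_eq atLeastAtMost_iff diff_Suc_1 le_add1 plus_1_eq_Suc)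
    then have "v = 0\<^sub>v k"
      using v(1) by (intro eq_vecI) auto
    with v(2) show False by simp
  qed
  then obtain Y where Y: "Y \<in> carrier_mat k k" "A * Y = 1\<^sub>m k"
    using det_non_zero_imp_unit[OF A, of undefined] unfolding Units_def ring_mat_def by auto
  define \<beta> where "\<beta> i n = Y $$ (n - 1, i - 1)" for i n
  have "(\<Sum>n=1..k. \<beta> i n * \<alpha> n l) = (if i = l then 1 else 0)"
    if "i \<in> {1..k}" "l \<in> {1..k}" for i l
  proof -
    have "(A * Y) $$ (l - 1, i - 1) = (if i = l then 1 else 0)"
      using Y(2) that by auto
    moreover have "(A * Y) $$ (l - 1, i - 1) = (\<Sum>n<k. \<alpha> (Suc n) l * Y $$ (n, i - 1))"
      using that Y(1) unfolding A_def
      by (auto simp: times_mat_def scalar_prod_def atLeast0LessThan row_def col_def)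
    ultimately show ?thesis
      unfolding sum.atLeast1_atMost_eq[folded One_nat_def] \<beta>_def by (simp add: ac_simps)
  qed
  then show ?thesis by blast
qed

lemma left_inverse_sum_abs_le:
  fixes \<alpha> \<beta> :: "'a \<Rightarrow> 'a \<Rightarrow> real" and x w :: "'a \<Rightarrow> real"
  assumes "finite A" and left_inv: "\<forall>i\<in>A. \<forall>l\<in>A. (\<Sum>n\<in>A. \<beta> i n * \<alpha> n l) = (if i = l then 1 else 0)"
  shows "(\<Sum>i\<in>A. \<bar>x i - (\<Sum>n\<in>A. \<beta> i n * w n)\<bar>)
           \<le> (\<Sum>i\<in>A. \<Sum>n\<in>A. \<bar>\<beta> i n\<bar>) * (\<Sum>n\<in>A. \<bar>(\<Sum>l\<in>A. \<alpha> n l * x l) - w n\<bar>)"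
proof -
  define e where "e n = (\<Sum>l\<in>A. \<alpha> n l * x l) - w n" for n
  have x_eq: "x i - (\<Sum>n\<in>A. \<beta> i n * w n) = (\<Sum>n\<in>A. \<beta> i n * e n)" if i: "i \<in> A" for i
  proof -
    have "(\<Sum>n\<in>A. \<beta> i n * (\<Sum>l\<in>A. \<alpha> n l * x l)) = (\<Sum>n\<in>A. \<Sum>l\<in>A. \<beta> i n * \<alpha> n l * x l)"
      by (simp add: sum_distrib_left mult.assoc)
    also have "\<dots> = (\<Sum>l\<in>A. \<Sum>n\<in>A. \<beta> i n * \<alpha> n l * x l)"
      by (rule sum.swap)
    also have "\<dots> = (\<Sum>l\<in>A. (\<Sum>n\<in>A. \<beta> i n * \<alpha> n l) * x l)"
      by (simp add: sum_distrib_right)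
    also have "\<dots> = (\<Sum>l\<in>A. if i = l then x l else 0)"
      using left_inv i by (intro sum.cong) auto
    also have "\<dots> = x i"
      using assms(1) i by simp
    finally show ?thesis
      unfolding e_def by (simp add: right_diff_distrib sum_subtractf)
  qed
  have "(\<Sum>i\<in>A. \<bar>x i - (\<Sum>n\<in>A. \<beta> i n * w n)\<bar>) \<le> (\<Sum>i\<in>A. \<Sum>n\<in>A. \<bar>\<beta> i n\<bar> * \<bar>e n\<bar>)"
  proof (rule sum_mono)
    fix i assume "i \<in> A"
    then have "\<bar>x i - (\<Sum>n\<in>A. \<beta> i n * w n)\<bar> = \<bar>\<Sum>n\<in>A. \<beta> i n * e n\<bar>"
      using x_eq by simp
    also have "\<dots> \<le> (\<Sum>n\<in>A. \<bar>\<beta> i n * e n\<bar>)"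
      by (rule sum_abs)
    finally show "\<bar>x i - (\<Sum>n\<in>A. \<beta> i n * w n)\<bar> \<le> (\<Sum>n\<in>A. \<bar>\<beta> i n\<bar> * \<bar>e n\<bar>)"
      by (simp add: abs_mult)
  qed
  also have "\<dots> \<le> (\<Sum>i\<in>A. \<Sum>n\<in>A. \<bar>\<beta> i n\<bar> * (\<Sum>m\<in>A. \<bar>e m\<bar>))"
    using assms(1) by (intro sum_mono mult_left_mono member_le_sum) auto
  finally show ?thesis
    unfolding e_def by (simp add: sum_distrib_right)
qed

lemma weighted_sum_zero_imp_sum_abs_le:
  fixes \<theta> z :: "'a \<Rightarrow> real"
  assumes "finite I" "I \<noteq> {}" and \<theta>_pos: "\<forall>n\<in>I. \<theta> n > 0"
    and \<theta>_sum: "sum \<theta> I = 1" and balanced: "(\<Sum>n\<in>I. \<theta> n * z n) = 0"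
  shows "\<exists>n\<in>I. (\<Sum>l\<in>I. \<bar>z l\<bar>) \<le> (1 / Min (\<theta> ` I) + card I) * - z n"
proof -
  define m where "m = Min (z ` I)"
  have "m \<in> z ` I"
    unfolding m_def using assms(1,2) by simp
  then obtain n where n: "n \<in> I" "z n = m" by auto
  have m_le: "m \<le> z l" if "l \<in> I" for l
    unfolding m_def using assms(1) that by simp
  define \<mu> where "\<mu> = Min (\<theta> ` I)"
  have "\<mu> \<in> \<theta> ` I"
    unfolding \<mu>_def using assms(1,2) by simp
  then have \<mu>_pos: "\<mu> > 0"
    using \<theta>_pos by auto
  have \<mu>_le: "\<mu> \<le> \<theta> l" if "l \<in> I" for l
    unfolding \<mu>_def using assms(1) that by simp
  have shifted: "(\<Sum>l\<in>I. \<theta> l * (z l - m)) = - m"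
    using balanced \<theta>_sum by (simp add: right_diff_distrib sum_subtractf sum_distrib_right[symmetric])
  have "\<mu> * (\<Sum>l\<in>I. z l - m) = (\<Sum>l\<in>I. \<mu> * (z l - m))"
    by (simp add: sum_distrib_left)
  also have "\<dots> \<le> - m"
    unfolding shifted[symmetric] using m_le \<mu>_le by (intro sum_mono mult_right_mono) auto
  finally have spread: "(\<Sum>l\<in>I. z l - m) \<le> - m / \<mu>"
    by (subst pos_le_divide_eq[OF \<mu>_pos]) (simp add: mult.commute)
  have "0 \<le> (\<Sum>l\<in>I. \<theta> l * (z l - m))"
    using \<theta>_pos m_le by (intro sum_nonneg) auto
  then have "m \<le> 0"
    using shifted by linarith
  then have "(\<Sum>l\<in>I. \<bar>z l\<bar>) \<le> (\<Sum>l\<in>I. (z l - m) + - m)"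
    using m_le by (intro sum_mono) fastforce
  also have "\<dots> = (\<Sum>l\<in>I. z l - m) + card I * - m"
    by (subst sum.distrib) simp
  also have "\<dots> \<le> (1 / \<mu> + card I) * - m"
    using spread by (simp add: algebra_simps)
  finally show ?thesis
    using n unfolding \<mu>_def by auto
qed

lemma Min_le_weighted_geometric_mean:
  fixes y \<theta> :: "'a \<Rightarrow> real"
  assumes "finite I" "I \<noteq> {}" and \<theta>_pos: "\<forall>n\<in>I. \<theta> n > 0" and \<theta>_sum: "sum \<theta> I = 1"
    and y_pos: "\<forall>n\<in>I. y n > 0"
  defines "G \<equiv> \<Prod>n\<in>I. y n powr \<theta> n"
  shows "Min (y ` I) \<le> G * exp (- (\<Sum>n\<in>I. \<bar>ln (y n / G)\<bar>) / (1 / Min (\<theta> ` I) + card I))"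
proof -
  define D where "D = 1 / Min (\<theta> ` I) + card I"
  define z where "z n = ln (y n / G)" for n
  have G_pos: "G > 0"
    unfolding G_def using y_pos by (auto intro!: prod_pos)
  have "ln G = (\<Sum>n\<in>I. \<theta> n * ln (y n))"
    unfolding G_def using assms(1) y_pos by (subst ln_prod) auto
  then have "(\<Sum>n\<in>I. \<theta> n * z n) = 0"
    using y_pos G_pos \<theta>_sum
    by (simp add: z_def ln_divide_pos right_diff_distrib sum_subtractf sum_distrib_right[symmetric])
  then obtain n where n: "n \<in> I" and spread: "(\<Sum>l\<in>I. \<bar>z l\<bar>) \<le> D * - z n"
    using weighted_sum_zero_imp_sum_abs_le[OF assms(1-2) \<theta>_pos \<theta>_sum] unfolding D_def by blast
  have "Min (\<theta> ` I) \<in> \<theta> ` I"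
    using assms(1,2) by simp
  then have "D > 0"
    unfolding D_def using \<theta>_pos by (auto intro: add_pos_nonneg)
  with spread have z_le: "z n \<le> - (\<Sum>l\<in>I. \<bar>z l\<bar>) / D"
    by (simp add: field_simps)
  have "Min (y ` I) \<le> y n"
    using assms(1) n by simp
  also have "\<dots> = G * exp (z n)"
    using y_pos n G_pos by (simp add: z_def)
  also have "\<dots> \<le> G * exp (- (\<Sum>l\<in>I. \<bar>z l\<bar>) / D)"
    using z_le G_pos by simp
  finally show ?thesis
    unfolding z_def D_def .
qed

lemma prod_powr_mult_balanced_powr:
  fixes M \<theta> x :: "'a \<Rightarrow> real" and c :: real
  assumes "c \<noteq> 0" and balanced: "(\<Sum>n\<in>I. \<theta> n * x n) = 0"
  shows "(\<Prod>n\<in>I. (M n * c powr x n) powr \<theta> n) = (\<Prod>n\<in>I. M n powr \<theta> n)"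
proof -
  have "(\<Prod>n\<in>I. (M n * c powr x n) powr \<theta> n) = (\<Prod>n\<in>I. M n powr \<theta> n) * (\<Prod>n\<in>I. c powr (\<theta> n * x n))"
    by (simp add: powr_mult powr_powr prod.distrib mult.commute)
  also have "(\<Prod>n\<in>I. c powr (\<theta> n * x n)) = 1"
    using assms by (simp add: powr_sum[symmetric])
  finally show ?thesis by simp
qed

lemma sum_mult_dotZ_eq_0:
  assumes "\<forall>i\<in>{1..d}. (\<Sum>n\<in>I. \<theta> n * \<alpha> n i) = 0"
  shows "(\<Sum>n\<in>I. \<theta> n * dotZ d (\<alpha> n) j) = 0"
proof -
  have "(\<Sum>n\<in>I. \<theta> n * dotZ d (\<alpha> n) j) = (\<Sum>i=1..d. (\<Sum>n\<in>I. \<theta> n * \<alpha> n i) * of_int (j i))"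
    unfolding dotZ_def by (simp add: sum_distrib_left sum_distrib_right mult.assoc sum.swap[of _ I])
  also have "\<dots> = 0"
    using assms by simp
  finally show ?thesis .
qed

lemma dotZ_split:
  assumes "k \<le> d"
  shows "dotZ d x j = (\<Sum>i=1..k. x i * of_int (j i)) + (\<Sum>i=k+1..d. x i * of_int (j i))"
proof -
  have "{1..d} = {1..k} \<union> {k+1..d}" using assms by auto
  then show ?thesis
    unfolding dotZ_def by (simp add: sum.union_disjoint)
qed

lemma Min_powr_dotZ_le:
  fixes \<theta> M :: "nat \<Rightarrow> real" and \<alpha> :: "nat \<Rightarrow> nat \<Rightarrow> real" and j :: "nat \<Rightarrow> int"
  assumes "finite I" "I \<noteq> {}" and \<theta>_pos: "\<forall>n\<in>I. \<theta> n > 0" and \<theta>_sum: "sum \<theta> I = 1"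
    and balanced: "\<forall>i\<in>{1..d}. (\<Sum>n\<in>I. \<theta> n * \<alpha> n i) = 0"
    and M_pos: "\<forall>n\<in>I. M n > 0"
  defines "P \<equiv> \<Prod>n\<in>I. M n powr \<theta> n"
  shows "Min ((\<lambda>n. M n * 2 powr dotZ d (\<alpha> n) j) ` I)
           \<le> P * exp (- (\<Sum>n\<in>I. \<bar>ln (M n * 2 powr dotZ d (\<alpha> n) j / P)\<bar>) / (1 / Min (\<theta> ` I) + card I))"
proof -
  have "(\<Prod>n\<in>I. (M n * 2 powr dotZ d (\<alpha> n) j) powr \<theta> n) = P"
    unfolding P_def using sum_mult_dotZ_eq_0[OF balanced] by (rule prod_powr_mult_balanced_powr[rotated]) simp
  then show ?thesis
    using Min_le_weighted_geometric_mean[OF assms(1,2) \<theta>_pos \<theta>_sum, of "\<lambda>n. M n * 2 powr dotZ d (\<alpha> n) j"] M_pos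
    by simp
qed

lemma sum_abs_dist_le_sum_abs_ln_ratio:
  fixes \<alpha> \<beta> :: "nat \<Rightarrow> nat \<Rightarrow> real" and M :: "nat \<Rightarrow> real" and P :: real and j :: "nat \<Rightarrow> int"
  assumes "k \<le> d" "P > 0" and M_pos: "\<forall>n\<in>{1..k}. M n > 0"
    and left_inv: "\<forall>i\<in>{1..k}. \<forall>l\<in>{1..k}. (\<Sum>n=1..k. \<beta> i n * \<alpha> n l) = (if i = l then 1 else 0)"
  shows "(\<Sum>i=1..k. \<bar>of_int (j i) - (\<Sum>n=1..k. \<beta> i n * (ln (P / M n) / ln 2 - (\<Sum>l=k+1..d. \<alpha> n l * of_int (j l))))\<bar>)
           \<le> (\<Sum>i=1..k. \<Sum>n=1..k. \<bar>\<beta> i n\<bar>) / ln 2 * (\<Sum>n=1..k. \<bar>ln (M n * 2 powr dotZ d (\<alpha> n) j / P)\<bar>)"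
proof -
  define w where "w n = ln (P / M n) / ln 2 - (\<Sum>l=k+1..d. \<alpha> n l * of_int (j l))" for n
  have ln_ratio: "ln (M n * 2 powr dotZ d (\<alpha> n) j / P) = ln 2 * ((\<Sum>l=1..k. \<alpha> n l * of_int (j l)) - w n)"
    if "n \<in> {1..k}" for n
  proof -
    have "M n > 0"
      using M_pos that by blast
    then show ?thesis
      using assms(1,2) by (simp add: w_def ln_divide_pos ln_mult dotZ_split field_simps)
  qed
  have "(\<Sum>i=1..k. \<bar>of_int (j i) - (\<Sum>n=1..k. \<beta> i n * w n)\<bar>)
      \<le> (\<Sum>i=1..k. \<Sum>n=1..k. \<bar>\<beta> i n\<bar>) * (\<Sum>n=1..k. \<bar>(\<Sum>l=1..k. \<alpha> n l * of_int (j l)) - w n\<bar>)"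
    by (rule left_inverse_sum_abs_le[OF _ left_inv]) simp
  also have "\<dots> = (\<Sum>i=1..k. \<Sum>n=1..k. \<bar>\<beta> i n\<bar>) / ln 2 * (\<Sum>n=1..k. \<bar>ln (M n * 2 powr dotZ d (\<alpha> n) j / P)\<bar>)"
    using ln_ratio by (simp add: abs_mult sum_distrib_left)
  finally show ?thesis
    unfolding w_def .
qed

lemma Min_le_exponential_decay:
  fixes \<alpha> \<beta> :: "nat \<Rightarrow> nat \<Rightarrow> real" and \<theta> M :: "nat \<Rightarrow> real" and j :: "nat \<Rightarrow> int"
  assumes "k \<le> d"
    and \<theta>_pos: "\<forall>n\<in>{1..k+1}. \<theta> n > 0" and \<theta>_sum: "(\<Sum>n=1..k+1. \<theta> n) = 1"
    and balanced: "\<forall>i\<in>{1..d}. (\<Sum>n=1..k+1. \<theta> n * \<alpha> n i) = 0"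
    and left_inv: "\<forall>i\<in>{1..k}. \<forall>l\<in>{1..k}. (\<Sum>n=1..k. \<beta> i n * \<alpha> n l) = (if i = l then 1 else 0)"
    and M_pos: "\<forall>n\<in>{1..k+1}. M n > 0"
  defines "P \<equiv> \<Prod>n=1..k+1. M n powr \<theta> n"
    and "\<rho> \<equiv> ln 2 / ((1 / Min (\<theta> ` {1..k+1}) + real (k + 1)) * (1 + (\<Sum>i=1..k. \<Sum>n=1..k. \<bar>\<beta> i n\<bar>)))"
  shows "Min ((\<lambda>n. M n * 2 powr dotZ d (\<alpha> n) j) ` {1..k+1})
           \<le> P * (\<Prod>i=1..k. exp (- \<rho> * \<bar>of_int (j i)
                 - (\<Sum>n=1..k. \<beta> i n * (ln (P / M n) / ln 2 - (\<Sum>l=k+1..d. \<alpha> n l * of_int (j l))))\<bar>))"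
proof -
  define t where "t i = (\<Sum>n=1..k. \<beta> i n * (ln (P / M n) / ln 2 - (\<Sum>l=k+1..d. \<alpha> n l * of_int (j l))))" for i
  define D where "D = 1 / Min (\<theta> ` {1..k+1}) + real (k + 1)"
  define R where "R = (\<Sum>i=1..k. \<Sum>n=1..k. \<bar>\<beta> i n\<bar>)"
  define S where "S = (\<Sum>n=1..k+1. \<bar>ln (M n * 2 powr dotZ d (\<alpha> n) j / P)\<bar>)"
  define E where "E = (\<Sum>i=1..k. \<bar>of_int (j i) - t i\<bar>)"
  have "M n \<noteq> 0" if "n \<in> {1..k+1}" for n
    using M_pos that by force
  then have P_pos: "P > 0"
    unfolding P_def by (intro prod_pos) simp
  have "Min (\<theta> ` {1..k+1}) \<in> \<theta> ` {1..k+1}"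
    by simp
  then have D_pos: "D > 0"
    unfolding D_def using \<theta>_pos by (auto intro: add_pos_nonneg)
  have R_nonneg: "R \<ge> 0"
    unfolding R_def by (intro sum_nonneg) auto
  have S_nonneg: "S \<ge> 0"
    unfolding S_def by (intro sum_nonneg) simp
  have \<rho>_eq: "\<rho> = ln 2 / (D * (1 + R))"
    unfolding \<rho>_def D_def R_def ..
  have "\<forall>n\<in>{1..k}. M n > 0"
    using M_pos by simp
  then have "E \<le> R / ln 2 * (\<Sum>n=1..k. \<bar>ln (M n * 2 powr dotZ d (\<alpha> n) j / P)\<bar>)"
    unfolding E_def R_def t_def by (rule sum_abs_dist_le_sum_abs_ln_ratio[OF \<open>k \<le> d\<close> P_pos _ left_inv])
  also have "\<dots> \<le> R / ln 2 * S"
    unfolding S_def using R_nonneg by (intro mult_left_mono sum_mono2) auto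
  finally have "\<rho> * E \<le> \<rho> * (R / ln 2 * S)"
    unfolding \<rho>_eq using D_pos R_nonneg by (intro mult_left_mono) auto
  also have "\<dots> = S / D * (R / (1 + R))"
    unfolding \<rho>_eq using R_nonneg by (simp add: field_simps)
  also have "\<dots> \<le> S / D"
    using D_pos R_nonneg S_nonneg by (intro mult_left_le) auto
  finally have "P * exp (- S / D) \<le> P * exp (- \<rho> * E)"
    using P_pos by simp
  moreover have "Min ((\<lambda>n. M n * 2 powr dotZ d (\<alpha> n) j) ` {1..k+1}) \<le> P * exp (- S / D)"
    using Min_powr_dotZ_le[OF finite_atLeastAtMost _ \<theta>_pos \<theta>_sum balanced M_pos, of j]
    unfolding S_def D_def P_def by simp
  ultimately show ?thesis
    unfolding E_def t_def by (simp add: sum_distrib_left exp_sum)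
qed

lemma sum_power_le_geometric:
  fixes x :: real
  assumes "finite A" "0 \<le> x" "x < 1"
  shows "(\<Sum>n\<in>A. x ^ n) \<le> 1 / (1 - x)"
proof -
  have "(\<Sum>n\<in>A. x ^ n) \<le> (\<Sum>n. x ^ n)"
    using assms by (intro sum_le_suminf summable_geometric) auto
  also have "\<dots> = 1 / (1 - x)"
    using suminf_geometric[of x] assms by simp
  finally show ?thesis .
qed

lemma sum_power_nat_abs_le:
  fixes x :: real
  assumes "finite Q" "0 \<le> x" "x < 1"
  shows "(\<Sum>q\<in>Q. x ^ nat \<bar>q\<bar>) \<le> 2 / (1 - x)"
proof -
  have Q: "Q = {q\<in>Q. q \<ge> 0} \<union> {q\<in>Q. q < 0}"
    by auto
  have "(\<Sum>q\<in>Q. x ^ nat \<bar>q\<bar>) = (\<Sum>q\<in>{q\<in>Q. q \<ge> 0}. x ^ nat \<bar>q\<bar>) + (\<Sum>q\<in>{q\<in>Q. q < 0}. x ^ nat \<bar>q\<bar>)"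
    using assms(1) by (subst Q, subst sum.union_disjoint) auto
  also have "(\<Sum>q\<in>{q\<in>Q. q \<ge> 0}. x ^ nat \<bar>q\<bar>) = (\<Sum>n\<in>(\<lambda>q. nat \<bar>q\<bar>) ` {q\<in>Q. q \<ge> 0}. x ^ n)"
    by (subst sum.reindex) (auto simp: inj_on_def)
  also have "\<dots> \<le> 1 / (1 - x)"
    using assms by (intro sum_power_le_geometric) auto
  also have "(\<Sum>q\<in>{q\<in>Q. q < 0}. x ^ nat \<bar>q\<bar>) = (\<Sum>n\<in>(\<lambda>q. nat \<bar>q\<bar>) ` {q\<in>Q. q < 0}. x ^ n)"
    by (subst sum.reindex) (auto simp: inj_on_def)
  also have "\<dots> \<le> 1 / (1 - x)"
    using assms by (intro sum_power_le_geometric) auto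
  finally show ?thesis
    by simp
qed

lemma sum_exp_neg_abs_dist_le:
  fixes \<rho> t :: real
  assumes "finite S" "\<rho> > 0"
  shows "(\<Sum>m\<in>S. exp (- \<rho> * \<bar>of_int m - t\<bar>)) \<le> 2 * exp \<rho> / (1 - exp (- \<rho>))"
proof -
  define c where "c = \<lceil>t\<rceil>"
  define x where "x = exp (- \<rho>)"
  have x: "0 \<le> x" "x < 1"
    unfolding x_def using assms by auto
  have "exp (- \<rho> * \<bar>of_int m - t\<bar>) \<le> exp \<rho> * x ^ nat \<bar>m - c\<bar>" for m
  proof -
    have "\<bar>of_int m - of_int c\<bar> \<le> \<bar>of_int m - t\<bar> + 1"
      unfolding c_def using ceiling_correct[of t] by linarith
    then have "\<rho> * \<bar>of_int m - of_int c\<bar> \<le> \<rho> * (\<bar>of_int m - t\<bar> + 1)"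
      using assms(2) by (intro mult_left_mono) auto
    then have "- \<rho> * \<bar>of_int m - t\<bar> \<le> \<rho> + - \<rho> * \<bar>of_int m - of_int c\<bar>"
      by (simp add: algebra_simps)
    then have "exp (- \<rho> * \<bar>of_int m - t\<bar>) \<le> exp (\<rho> + - \<rho> * \<bar>of_int m - of_int c\<bar>)"
      by simp
    also have "\<dots> = exp \<rho> * x ^ nat \<bar>m - c\<bar>"
      unfolding x_def exp_add exp_of_nat_mult[symmetric] by (simp add: mult.commute)
    finally show ?thesis .
  qed
  then have "(\<Sum>m\<in>S. exp (- \<rho> * \<bar>of_int m - t\<bar>)) \<le> exp \<rho> * (\<Sum>q\<in>(\<lambda>m. m - c) ` S. x ^ nat \<bar>q\<bar>)"
    by (simp add: sum_mono sum_distrib_left sum.reindex inj_on_def)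
  also have "\<dots> \<le> exp \<rho> * (2 / (1 - x))"
    using assms x by (intro mult_left_mono sum_power_nat_abs_le) auto
  finally show ?thesis
    by (simp add: x_def mult.commute)
qed

lemma lattice_box_sum_prod_le:
  fixes f :: "real \<Rightarrow> real" and t :: "nat \<Rightarrow> (nat \<Rightarrow> int) \<Rightarrow> real"
  assumes "k \<le> d" "finite F" "F \<subseteq> lattice_box d k a b"
    and f_nonneg: "\<And>x. f x \<ge> 0"
    and f_sum: "\<And>S u. finite S \<Longrightarrow> (\<Sum>m\<in>S. f (of_int m - u)) \<le> K"
    and t_tail: "\<And>i j j'. \<forall>l\<in>{k+1..d}. j l = j' l \<Longrightarrow> t i j = t i j'"
  shows "(\<Sum>j\<in>F. \<Prod>i=1..k. f (of_int (j i) - t i j)) \<le> (\<Prod>i=k+1..d. real (card {a i..b i})) * K ^ k"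
proof -
  define T where "T = (\<Pi>\<^sub>E i\<in>{k+1..d}. {a i..b i})"
  define H where "H = (\<Pi>\<^sub>E i\<in>{1..k}. (\<lambda>j. j i) ` F)"
  define \<phi> where "\<phi> j = (restrict j {k+1..d}, restrict j {1..k})" for j :: "nat \<Rightarrow> int"
  define g where "g u v = (\<Prod>i=1..k. f (of_int (v i) - t i u))" for u v :: "nat \<Rightarrow> int"
  have T_H_finite: "finite (T \<times> H)"
    unfolding T_def H_def using assms(2) by (auto intro!: finite_PiE)
  have "inj_on \<phi> F"
  proof (rule inj_onI)
    fix j j' assume "j \<in> F" "j' \<in> F" "\<phi> j = \<phi> j'"
    then have tail: "restrict j {k+1..d} = restrict j' {k+1..d}"
      and head: "restrict j {1..k} = restrict j' {1..k}"
      by (simp_all add: \<phi>_def)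
    show "j = j'"
    proof
      fix i
      consider "i \<in> {1..k}" | "i \<in> {k+1..d}" | "i \<notin> {1..d}"
        using assms(1) by force
      then show "j i = j' i"
      proof cases
        case 1
        then show ?thesis using fun_cong[OF head, of i] by simp
      next
        case 2
        then show ?thesis using fun_cong[OF tail, of i] by simp
      next
        case 3
        have "j \<in> lattice_box d k a b" "j' \<in> lattice_box d k a b"
          using \<open>j \<in> F\<close> \<open>j' \<in> F\<close> assms(3) by blast+
        then show ?thesis
          using 3 unfolding lattice_box_def by simp
      qed
    qed
  qed
  have "\<phi> ` F \<subseteq> T \<times> H"
    using assms(3) unfolding \<phi>_def T_def H_def lattice_box_def by auto
  have g_\<phi>: "case_prod g (\<phi> j) = (\<Prod>i=1..k. f (of_int (j i) - t i j))" for j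
    unfolding g_def \<phi>_def using t_tail[of "restrict j {k+1..d}" j] by (auto intro!: prod.cong)
  have "(\<Sum>j\<in>F. \<Prod>i=1..k. f (of_int (j i) - t i j)) = (\<Sum>p\<in>\<phi> ` F. case_prod g p)"
    using \<open>inj_on \<phi> F\<close> by (simp add: sum.reindex g_\<phi>)
  also have "\<dots> \<le> (\<Sum>p\<in>T \<times> H. case_prod g p)"
    using T_H_finite \<open>\<phi> ` F \<subseteq> T \<times> H\<close> f_nonneg
    by (intro sum_mono2) (auto simp: g_def intro!: prod_nonneg)
  also have "\<dots> = (\<Sum>u\<in>T. \<Prod>i=1..k. \<Sum>m\<in>(\<lambda>j. j i) ` F. f (of_int m - t i u))"
    unfolding sum.cartesian_product[symmetric] H_def g_def using assms(2)
    by (simp add: prod_sum_PiE)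
  also have "\<dots> \<le> (\<Sum>u\<in>T. K ^ k)"
  proof (rule sum_mono)
    fix u
    have "(\<Prod>i=1..k. \<Sum>m\<in>(\<lambda>j. j i) ` F. f (of_int m - t i u)) \<le> (\<Prod>i=1..k. K)"
      using assms(2) f_nonneg f_sum by (intro prod_mono conjI sum_nonneg) auto
    then show "(\<Prod>i=1..k. \<Sum>m\<in>(\<lambda>j. j i) ` F. f (of_int m - t i u)) \<le> K ^ k"
      by simp
  qed
  also have "\<dots> = (\<Prod>i=k+1..d. real (card {a i..b i})) * K ^ k"
    unfolding T_def by (simp add: card_PiE)
  finally show ?thesis .
qed

lemma prod_card_Icc_le:
  fixes a b :: "'i \<Rightarrow> int"
  assumes "\<forall>i\<in>I. a i < b i"
  shows "(\<Prod>i\<in>I. real (card {a i..b i})) \<le> 2 ^ card I * (\<Prod>i\<in>I. real_of_int (b i - a i))"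
proof -
  have "(\<Prod>i\<in>I. real (card {a i..b i})) \<le> (\<Prod>i\<in>I. 2 * real_of_int (b i - a i))"
    using assms by (intro prod_mono) auto
  also have "\<dots> = 2 ^ card I * (\<Prod>i\<in>I. real_of_int (b i - a i))"
    by (simp only: prod.distrib prod_constant)
  finally show ?thesis .
qed

lemma infsum_ennreal_le_finite_sums:
  fixes f :: "'a \<Rightarrow> real"
  assumes "\<And>x. x \<in> A \<Longrightarrow> f x \<ge> 0" and "\<And>F. finite F \<Longrightarrow> F \<subseteq> A \<Longrightarrow> sum f F \<le> B"
  shows "(\<Sum>\<^sub>\<infinity>x\<in>A. ennreal (f x)) \<le> ennreal B"
proof (rule infsum_le_finite_sums)
  show "(\<lambda>x. ennreal (f x)) summable_on A"
    by (rule nonneg_summable_on_complete) simp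
next
  fix F assume "finite F" "F \<subseteq> A"
  then have "(\<Sum>x\<in>F. ennreal (f x)) = ennreal (sum f F)"
    using assms(1) by (subst sum_ennreal) auto
  also have "\<dots> \<le> ennreal B"
    using assms(2)[OF \<open>finite F\<close> \<open>F \<subseteq> A\<close>] by (rule ennreal_leI)
  finally show "(\<Sum>x\<in>F. ennreal (f x)) \<le> ennreal B" .
qed

lemma infsum_lattice_box_le:
  fixes f :: "real \<Rightarrow> real" and t :: "nat \<Rightarrow> (nat \<Rightarrow> int) \<Rightarrow> real" and g :: "(nat \<Rightarrow> int) \<Rightarrow> real"
  assumes "k \<le> d" and a_less_b: "\<forall>i\<in>{k+1..d}. a i < b i"
    and f_nonneg: "\<And>x. f x \<ge> 0"
    and f_sum: "\<And>S u. finite S \<Longrightarrow> (\<Sum>m\<in>S. f (of_int m - u)) \<le> K"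
    and t_tail: "\<And>i j j'. \<forall>l\<in>{k+1..d}. j l = j' l \<Longrightarrow> t i j = t i j'"
    and "c \<ge> 0" and g_nonneg: "\<And>j. g j \<ge> 0"
    and g_le: "\<And>j. g j \<le> c * (\<Prod>i=1..k. f (of_int (j i) - t i j))"
  shows "(\<Sum>\<^sub>\<infinity>j\<in>lattice_box d k a b. ennreal (g j))
           \<le> ennreal (2 ^ (d - k) * K ^ k * (\<Prod>i=k+1..d. real_of_int (b i - a i)) * c)"
proof (rule infsum_ennreal_le_finite_sums[OF g_nonneg])
  fix F assume F: "finite F" "F \<subseteq> lattice_box d k a b"
  have "K \<ge> 0"
    using f_sum[of "{}"] by simp
  have "sum g F \<le> c * (\<Sum>j\<in>F. \<Prod>i=1..k. f (of_int (j i) - t i j))"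
    using g_le by (simp add: sum_distrib_left sum_mono)
  also have "\<dots> \<le> c * ((\<Prod>i=k+1..d. real (card {a i..b i})) * K ^ k)"
    using \<open>c \<ge> 0\<close> by (intro mult_left_mono lattice_box_sum_prod_le[OF \<open>k \<le> d\<close> F f_nonneg f_sum t_tail])
  also have "\<dots> \<le> c * (2 ^ (d - k) * (\<Prod>i=k+1..d. real_of_int (b i - a i)) * K ^ k)"
    using prod_card_Icc_le[OF a_less_b] \<open>c \<ge> 0\<close> \<open>K \<ge> 0\<close> by (intro mult_left_mono mult_right_mono) auto
  finally show "sum g F \<le> 2 ^ (d - k) * K ^ k * (\<Prod>i=k+1..d. real_of_int (b i - a i)) * c"
    by (simp add: ac_simps)
qed

theorem lemma5p3:
  fixes d k :: nat and \<alpha> :: "nat \<Rightarrow> nat \<Rightarrow> real" and \<theta> :: "nat \<Rightarrow> real"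
  assumes "1 \<le> k" and "k \<le> d"
    and "lin_indep_family d (\<lambda>n. if n \<le> k then \<alpha> n else std_basis n) {1..d}"
    and "\<forall>n\<in>{1..k+1}. \<theta> n > 0"
    and "(\<Sum>n=1..k+1. \<theta> n) = 1"
    and "\<forall>i\<in>{1..d}. (\<Sum>n=1..k+1. \<theta> n * \<alpha> n i) = 0"
  shows "\<exists>C :: real. \<forall>(M :: nat \<Rightarrow> real) (a :: nat \<Rightarrow> int) (b :: nat \<Rightarrow> int).
            (\<forall>n\<in>{1..k+1}. M n > 0) \<longrightarrow> (\<forall>i\<in>{k+1..d}. a i < b i) \<longrightarrow>
            (\<Sum>\<^sub>\<infinity>j\<in>lattice_box d k a b.
                ennreal (Min ((\<lambda>n. M n * 2 powr dotZ d (\<alpha> n) j) ` {1..k+1})))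
            \<le> ennreal (C * (\<Prod>i=k+1..d. real_of_int (b i - a i)) * (\<Prod>n=1..k+1. M n powr \<theta> n))"
proof -
  obtain \<beta> where left_inv: "\<forall>i\<in>{1..k}. \<forall>l\<in>{1..k}. (\<Sum>n=1..k. \<beta> i n * \<alpha> n l) = (if i = l then 1 else 0)"
    using lin_indep_family_left_inverse[OF lin_indep_family_truncate[OF assms(2,3)]] by blast
  define \<rho> where "\<rho> = ln 2 / ((1 / Min (\<theta> ` {1..k+1}) + real (k + 1)) * (1 + (\<Sum>i=1..k. \<Sum>n=1..k. \<bar>\<beta> i n\<bar>)))"
  have "Min (\<theta> ` {1..k+1}) \<in> \<theta> ` {1..k+1}"
    by simp
  then have "\<rho> > 0"
    unfolding \<rho>_def using assms(4) by (auto intro!: divide_pos_pos mult_pos_pos add_pos_nonneg sum_nonneg)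
  show ?thesis
  proof (intro exI allI impI)
    fix M :: "nat \<Rightarrow> real" and a b :: "nat \<Rightarrow> int"
    assume M_pos: "\<forall>n\<in>{1..k+1}. M n > 0" and a_less_b: "\<forall>i\<in>{k+1..d}. a i < b i"
    define P where "P = (\<Prod>n=1..k+1. M n powr \<theta> n)"
    define t where "t i j = (\<Sum>n=1..k. \<beta> i n * (ln (P / M n) / ln 2 - (\<Sum>l=k+1..d. \<alpha> n l * of_int (j l))))"
      for i and j :: "nat \<Rightarrow> int"
    have "P \<ge> 0"
      unfolding P_def by (intro prod_nonneg) simp
    show "(\<Sum>\<^sub>\<infinity>j\<in>lattice_box d k a b. ennreal (Min ((\<lambda>n. M n * 2 powr dotZ d (\<alpha> n) j) ` {1..k+1})))
        \<le> ennreal (2 ^ (d - k) * (2 * exp \<rho> / (1 - exp (- \<rho>))) ^ k * (\<Prod>i=k+1..d. real_of_int (b i - a i)) * P)"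
    proof (rule infsum_lattice_box_le[OF assms(2) a_less_b, where f = "\<lambda>x. exp (- \<rho> * \<bar>x\<bar>)" and t = t])
      show "(\<Sum>m\<in>S. exp (- \<rho> * \<bar>of_int m - u\<bar>)) \<le> 2 * exp \<rho> / (1 - exp (- \<rho>))" if "finite S" for S u
        using that \<open>\<rho> > 0\<close> by (rule sum_exp_neg_abs_dist_le)
      show "Min ((\<lambda>n. M n * 2 powr dotZ d (\<alpha> n) j) ` {1..k+1})
          \<le> P * (\<Prod>i=1..k. exp (- \<rho> * \<bar>of_int (j i) - t i j\<bar>))" for j
        unfolding P_def \<rho>_def t_def by (rule Min_le_exponential_decay[OF assms(2,4,5,6) left_inv M_pos])
      show "0 \<le> Min ((\<lambda>n. M n * 2 powr dotZ d (\<alpha> n) j) ` {1..k+1})" for j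
        using M_pos by (simp add: Min_ge_iff less_imp_le)
    qed (auto simp: t_def \<open>P \<ge> 0\<close>)
  qed
qed

end
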